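(* Let $n\ge3$ and $A\subseteq[n-1]$ nonempty, let $w=\max A$ and $A'=A\setminus\{w\}$. If $1<w<n-1$, then $$f_n(A)=2f_{n-1}(A)+f_{n-1}(A')-\sum_{j=w-1}^{n-2}f_j(A').$$
   Context: For $m\ge1$ and a set $B$ of positive integers, $f_m(B)$ denotes the number of linear orders $q$ on $[m]$ such that for every triple $i<j<k$ in $[m]$: if $j\in B$ then $i$ is not ranked last among $\{i,j,k\}$ in $q$, and if $j\notin B$ then $k$ is not ranked first among $\{i,j,k\}$ in $q$ (i.e. the size of the set-alternating domain on $[m]$ generated by $B\cap[m]$). *)

theory Defs
  imports Main
begin

text \<open>A linear order q on [m] = {1..m} is represented by a list enumerating [m]
  without repetition, listed from first-ranked to last-ranked. The rank of x in q
  is its position  pos q x.\<close>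

definition lin_orders :: "nat \<Rightarrow> nat list set" where
  "lin_orders m = {q. distinct q \<and> set q = {1..m}}"

definition pos :: "nat list \<Rightarrow> nat \<Rightarrow> nat" where
  "pos q x = (LEAST i. i < length q \<and> q ! i = x)"

definition admissible :: "nat \<Rightarrow> nat set \<Rightarrow> nat list \<Rightarrow> bool" where
  "admissible m B q \<longleftrightarrow>
     (\<forall>i j k. 1 \<le> i \<and> i < j \<and> j < k \<and> k \<le> m \<longrightarrow>
        (j \<in> B \<longrightarrow> \<not> (pos q j < pos q i \<and> pos q k < pos q i)) \<and>
        (j \<notin> B \<longrightarrow> \<not> (pos q k < pos q i \<and> pos q k < pos q j)))"

definition f :: "nat \<Rightarrow> nat set \<Rightarrow> nat" where
  "f m B = card {q \<in> lin_orders m. admissible m B q}"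

end

theory Submission
  imports Defs
begin

(* Sort the admissible orders by their last element x.  Removing x leaves an admissible order
   of the remaining numbers subject to two more conditions: the numbers above x that are not
   the largest lie outside B and all numbers above x appear in increasing order; and if x is
   not in B, every number below x comes before every number above x.
   Let w = Max A.  No order of [n] ends below w; the orders ending in some x > w are exactly
   L @ [x+1..n] @ [x] with L admissible on [x-1], so there are f_{x-1}(A) of them; the orders
   ending in w correspond to the admissible orders of [n] - {w} whose numbers above w increase.
   Splitting the latter once more by their last element, which is either n or below w, and
   closing the gap at w shows that their number H_n satisfies H_n = H_{n-1} + U, where U counts
   the orders of [n-1] admissible for A' = A - {w} that end below w.  The same decomposition
   for A' gives f_{n-1}(A') = (sum j = w-1..n-2. f_j(A')) + U, and comparing the expansions of
   f_n(A) and f_{n-1}(A) yields the identity. *)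

lemma pos_nth: "distinct q \<Longrightarrow> i < length q \<Longrightarrow> pos q (q ! i) = i"
  unfolding pos_def by (rule Least_equality) (auto simp: nth_eq_iff_index_eq)

lemma pos_less_length_nth:
  assumes "x \<in> set q"
  shows "pos q x < length q \<and> q ! pos q x = x"
proof -
  obtain i where i: "i < length q" "q ! i = x"
    using assms by (auto simp: in_set_conv_nth)
  have "pos q x \<le> i" unfolding pos_def by (rule Least_le) (use i in auto)
  moreover have "q ! pos q x = x" unfolding pos_def by (rule LeastI2[of _ i]) (use i in auto)
  ultimately show ?thesis using i by auto
qed

lemma pos_less_length: "x \<in> set q \<Longrightarrow> pos q x < length q"
  by (simp add: pos_less_length_nth)

lemma nth_pos: "x \<in> set q \<Longrightarrow> q ! pos q x = x"
  by (simp add: pos_less_length_nth)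

lemma pos_eq_iff: "x \<in> set q \<Longrightarrow> y \<in> set q \<Longrightarrow> pos q x = pos q y \<longleftrightarrow> x = y"
  by (metis nth_pos)

lemma pos_append_left: "distinct (q @ r) \<Longrightarrow> x \<in> set q \<Longrightarrow> pos (q @ r) x = pos q x"
  by (metis distinct_append nth_append_left pos_less_length_nth pos_nth length_append
      trans_less_add1)

lemma pos_append_right:
  "distinct (q @ r) \<Longrightarrow> x \<in> set r \<Longrightarrow> pos (q @ r) x = length q + pos r x"
  by (metis length_append nat_add_left_cancel_less nth_append_length_plus pos_less_length_nth
      pos_nth)

lemma pos_append_less:
  assumes "distinct (L @ R)" and "a \<in> set L" "b \<in> set R"
  shows "pos (L @ R) a < pos (L @ R) b"
  using pos_less_length[OF assms(2)]
  by (simp add: pos_append_left[OF assms(1,2)] pos_append_right[OF assms(1,3)])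

lemma pos_snoc: "distinct (q @ [x]) \<Longrightarrow> y \<in> set (q @ [x]) \<Longrightarrow>
    pos (q @ [x]) y = (if y = x then length q else pos q y)"
  using pos_append_left[of q "[x]" y] pos_append_right[of q "[x]" x] by (auto simp: pos_def)

lemma pos_map:
  assumes "inj_on g (set q)" and "x \<in> set q"
  shows "pos (map g q) (g x) = pos q x"
proof -
  have "i < length (map g q) \<and> map g q ! i = g x \<longleftrightarrow> i < length q \<and> q ! i = x" for i
    using assms by (auto simp: inj_on_eq_iff)
  then show ?thesis
    unfolding pos_def by simp
qed

lemma sorted_iff_pos_mono:
  assumes "distinct q"
  shows "sorted q \<longleftrightarrow> (\<forall>a\<in>set q. \<forall>b\<in>set q. a < b \<longrightarrow> pos q a < pos q b)"
proof
  assume sorted: "sorted q"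
  show "\<forall>a\<in>set q. \<forall>b\<in>set q. a < b \<longrightarrow> pos q a < pos q b"
  proof (intro ballI impI)
    fix a b assume ab: "a \<in> set q" "b \<in> set q" "a < b"
    show "pos q a < pos q b"
    proof (rule ccontr)
      assume "\<not> pos q a < pos q b"
      then have "q ! pos q b \<le> q ! pos q a"
        using sorted_nth_mono[OF sorted] pos_less_length[OF ab(1)] by simp
      then show False using ab by (simp add: nth_pos)
    qed
  qed
next
  assume mono: "\<forall>a\<in>set q. \<forall>b\<in>set q. a < b \<longrightarrow> pos q a < pos q b"
  show "sorted q"
    unfolding sorted_iff_nth_mono
  proof (intro allI impI)
    fix i j assume ij: "i \<le> j" "j < length q"
    show "q ! i \<le> q ! j"
    proof (rule ccontr)
      assume "\<not> q ! i \<le> q ! j"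
      then have "pos q (q ! j) < pos q (q ! i)" using mono ij by simp
      then show False using ij by (simp add: pos_nth[OF assms])
    qed
  qed
qed

lemma partition_by_pos:
  assumes "distinct q" and "\<forall>a\<in>set q. \<forall>b\<in>set q. P a \<longrightarrow> \<not> P b \<longrightarrow> pos q a < pos q b"
  shows "q = filter P q @ filter (\<lambda>y. \<not> P y) q"
  using assms
proof (induction q)
  case Nil
  then show ?case by simp
next
  case (Cons y ys)
  have pos_Cons: "pos (y # ys) a = Suc (pos ys a)" if "a \<in> set ys" for a
    using pos_append_right[of "[y]" ys a] Cons.prems(1) that by simp
  have pos_hd: "pos (y # ys) y = 0"
    using pos_nth[OF Cons.prems(1), of 0] by simp
  show ?case
  proof (cases "P y")
    case True
    then show ?thesis
      using Cons by (simp add: pos_Cons)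
  next
    case False
    then have "\<forall>a\<in>set ys. \<not> P a"
      using Cons.prems(2) pos_hd by fastforce
    then show ?thesis using False by simp
  qed
qed

definition increasing_above :: "nat \<Rightarrow> nat list \<Rightarrow> bool" where
  "increasing_above w q \<longleftrightarrow> (\<forall>j\<in>set q. \<forall>k\<in>set q. w < j \<longrightarrow> j < k \<longrightarrow> pos q j < pos q k)"

definition low_before_high :: "nat \<Rightarrow> nat list \<Rightarrow> bool" where
  "low_before_high x q \<longleftrightarrow> (\<forall>i\<in>set q. \<forall>k\<in>set q. i < x \<longrightarrow> x < k \<longrightarrow> pos q i < pos q k)"

lemma increasing_above_snoc:
  assumes "distinct (p @ [x])"
  shows "increasing_above w (p @ [x]) \<longleftrightarrow> increasing_above w p \<and> (w < x \<longrightarrow> (\<forall>k\<in>set p. k < x))"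
proof -
  have x: "x \<notin> set p"
    using assms by simp
  have r: "\<And>y. y \<in> set p \<Longrightarrow> pos (p @ [x]) y = pos p y" "pos (p @ [x]) x = length p"
    using pos_snoc[OF assms] x by auto
  have "(\<forall>k\<in>set p. x < k \<longrightarrow> length p < pos p k) \<longleftrightarrow> (\<forall>k\<in>set p. k < x)"
    using x pos_less_length[of _ p] by (metis less_asym linorder_neqE_nat)
  then show ?thesis
    unfolding increasing_above_def set_append set_simps Un_insert_right Un_empty_right ball_simps
    using x pos_less_length[of _ p] by (auto simp: r)
qed

lemma increasing_above_low_before_high_append:
  assumes "distinct (L @ R)" and "sorted R" and "\<forall>a\<in>set L. a < x" and "\<forall>b\<in>set R. x < b"
  shows "increasing_above x (L @ R)" and "low_before_high x (L @ R)"
proof -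
  have "pos R j < pos R k" if "j \<in> set R" "k \<in> set R" "j < k" for j k
    using that assms(1,2) by (simp add: sorted_iff_pos_mono)
  then show "increasing_above x (L @ R)"
    using assms(3) unfolding increasing_above_def
    by (auto simp: pos_append_right[OF assms(1)] dest: less_asym)
  show "low_before_high x (L @ R)"
    using assms(3,4) pos_append_less[OF assms(1)] unfolding low_before_high_def
    by (auto dest: less_asym)
qed

lemma eq_filter_below_sorted_above:
  assumes "distinct p" and "x \<notin> set p" and "increasing_above x p" and "low_before_high x p"
  shows "p = filter (\<lambda>y. y < x) p @ sorted_list_of_set {y \<in> set p. x < y}"
proof -
  define L R where "L = filter (\<lambda>y. y < x) p" and "R = filter (\<lambda>y. \<not> y < x) p"
  have "\<forall>a\<in>set p. \<forall>b\<in>set p. a < x \<longrightarrow> \<not> b < x \<longrightarrow> pos p a < pos p b"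
    using assms(2,4) unfolding low_before_high_def by (metis linorder_neqE_nat)
  then have pLR: "p = L @ R"
    unfolding L_def R_def by (rule partition_by_pos[OF assms(1)])
  have d: "distinct (L @ R)"
    using assms(1) by (simp only: pLR[symmetric])
  have set_R: "set R = {y \<in> set p. x < y}"
    unfolding R_def using assms(2) by (auto simp: order.strict_iff_order)
  have "pos R a < pos R b" if "a \<in> set R" "b \<in> set R" "a < b" for a b
  proof -
    have "pos (L @ R) a < pos (L @ R) b"
      using assms(3) that set_R unfolding increasing_above_def pLR[symmetric] by simp
    then show ?thesis
      using that by (simp add: pos_append_right[OF d])
  qed
  then have "sorted R"
    using d by (simp add: sorted_iff_pos_mono)
  then have "R = sorted_list_of_set {y \<in> set p. x < y}"
    using d set_R by (simp add: sorted_distinct_set_unique)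
  then show ?thesis
    using pLR unfolding L_def by simp
qed

(* The condition of admissible without the ambient range [m], so that it applies to
   orders of arbitrary finite sets of numbers. *)
definition alternating :: "nat set \<Rightarrow> nat list \<Rightarrow> bool" where
  "alternating B q \<longleftrightarrow> (\<forall>i\<in>set q. \<forall>j\<in>set q. \<forall>k\<in>set q. i < j \<longrightarrow> j < k \<longrightarrow>
     (j \<in> B \<longrightarrow> \<not> (pos q j < pos q i \<and> pos q k < pos q i)) \<and>
     (j \<notin> B \<longrightarrow> \<not> (pos q k < pos q i \<and> pos q k < pos q j)))"

lemma alternatingD:
  assumes "alternating B q" and "i \<in> set q" "j \<in> set q" "k \<in> set q" and "i < j" "j < k"
  shows "(j \<in> B \<longrightarrow> \<not> (pos q j < pos q i \<and> pos q k < pos q i)) \<and>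
    (j \<notin> B \<longrightarrow> \<not> (pos q k < pos q i \<and> pos q k < pos q j))"
  using assms unfolding alternating_def by blast

lemma alternating_snoc_iff:
  assumes "distinct (q @ [x])"
  shows "alternating B (q @ [x]) \<longleftrightarrow> alternating B q \<and> increasing_above x q \<and>
     (\<forall>j\<in>set q. \<forall>k\<in>set q. x < j \<longrightarrow> j < k \<longrightarrow> j \<notin> B) \<and> (x \<notin> B \<longrightarrow> low_before_high x q)"
proof -
  have x: "x \<notin> set q" using assms by auto
  have r: "\<And>y. y \<in> set q \<Longrightarrow> pos (q @ [x]) y = pos q y" "pos (q @ [x]) x = length q"
    using pos_snoc[OF assms] x by auto
  have L: "\<And>y. y \<in> set q \<Longrightarrow> length q < pos q y \<longleftrightarrow> False"
    "\<And>y. y \<in> set q \<Longrightarrow> pos q y < length q \<longleftrightarrow> True"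
    using pos_less_length[of _ q] by (auto simp: less_not_sym)
  have asym: "\<not> pos q k < pos q j \<longleftrightarrow> pos q j < pos q k"
    if "j \<in> set q" "k \<in> set q" "j < k" for j k
    using that pos_eq_iff[of j q k] by auto
  show ?thesis
    unfolding alternating_def increasing_above_def low_before_high_def
      set_append set_simps Un_insert_right Un_empty_right ball_simps
    using x by (auto simp: r L asym) blast+
qed

lemma alternating_sorted:
  assumes "sorted q" and "distinct q"
  shows "alternating B q"
  unfolding alternating_def
proof (intro ballI impI)
  fix i j k assume ijk: "i \<in> set q" "j \<in> set q" "k \<in> set q" "i < j" "j < k"
  then have "pos q i < pos q j" "pos q i < pos q k"
    using assms sorted_iff_pos_mono by (blast, meson less_trans)
  then show "(j \<in> B \<longrightarrow> \<not> (pos q j < pos q i \<and> pos q k < pos q i)) \<and>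
    (j \<notin> B \<longrightarrow> \<not> (pos q k < pos q i \<and> pos q k < pos q j))" by simp
qed

lemma alternating_append_left:
  assumes "distinct (L @ R)" and "alternating B (L @ R)"
  shows "alternating B L"
  unfolding alternating_def
proof (intro ballI impI)
  fix i j k assume ijk: "i \<in> set L" "j \<in> set L" "k \<in> set L" "i < j" "j < k"
  then show "(j \<in> B \<longrightarrow> \<not> (pos L j < pos L i \<and> pos L k < pos L i)) \<and>
    (j \<notin> B \<longrightarrow> \<not> (pos L k < pos L i \<and> pos L k < pos L j))"
    using alternatingD[OF assms(2), of i j k] by (simp add: pos_append_left[OF assms(1)])
qed

lemma alternating_append:
  assumes d: "distinct (L @ R)" and L: "alternating B L" and R: "alternating B R"
    and sep: "\<forall>a\<in>set L. \<forall>b\<in>set R. a < b"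
  shows "alternating B (L @ R)"
  unfolding alternating_def
proof (intro ballI impI)
  fix i j k
  assume ijk: "i \<in> set (L @ R)" "j \<in> set (L @ R)" "k \<in> set (L @ R)" "i < j" "j < k"
  then consider "i \<in> set L" "j \<in> set L" "k \<in> set L" | "i \<in> set L" "k \<in> set R"
    | "i \<in> set R" "j \<in> set R" "k \<in> set R"
    using sep by (metis Un_iff less_trans not_less_iff_gr_or_eq set_append)
  then show "(j \<in> B \<longrightarrow> \<not> (pos (L @ R) j < pos (L @ R) i \<and> pos (L @ R) k < pos (L @ R) i)) \<and>
    (j \<notin> B \<longrightarrow> \<not> (pos (L @ R) k < pos (L @ R) i \<and> pos (L @ R) k < pos (L @ R) j))"
  proof cases
    case 1
    then show ?thesis using alternatingD[OF L, of i j k] ijk by (simp add: pos_append_left[OF d])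
  next
    case 2
    then show ?thesis
      using pos_append_less[OF d] by (simp add: less_not_sym)
  next
    case 3
    then show ?thesis using alternatingD[OF R, of i j k] ijk by (simp add: pos_append_right[OF d])
  qed
qed

lemma alternating_append_sorted_iff:
  assumes "distinct (L @ R)" and "sorted R" and "\<forall>a\<in>set L. \<forall>b\<in>set R. a < b"
  shows "alternating B (L @ R) \<longleftrightarrow> alternating B L"
  using alternating_append_left[OF assms(1)] alternating_append[OF assms(1) _ _ assms(3)]
    alternating_sorted[OF assms(2)] assms(1) by auto

lemma alternating_map:
  assumes "strict_mono_on (set q) g" and "\<forall>a\<in>set q. g a \<in> B' \<longleftrightarrow> a \<in> B"
  shows "alternating B' (map g q) \<longleftrightarrow> alternating B q"
proof -
  have "inj_on g (set q)"
    using assms(1) by (rule strict_mono_on_imp_inj_on)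
  then show ?thesis
    using assms unfolding alternating_def set_map
    by (simp add: pos_map strict_mono_on_less)
qed

definition alternating_domain :: "nat set \<Rightarrow> nat set \<Rightarrow> nat list set" where
  "alternating_domain S B = {q. distinct q \<and> set q = S \<and> alternating B q}"

lemma f_eq_card_alternating_domain: "f m B = card (alternating_domain {1..m} B)"
proof -
  have "admissible m B q \<longleftrightarrow> alternating B q" if "set q = {1..m}" for q
    unfolding admissible_def alternating_def that by (auto 0 4)
  then have "{q \<in> lin_orders m. admissible m B q} = alternating_domain {1..m} B"
    unfolding lin_orders_def alternating_domain_def by blast
  then show ?thesis
    unfolding f_def by simp
qed

lemma finite_alternating_domain: "finite S \<Longrightarrow> finite (alternating_domain S B)"
  unfolding alternating_domain_def
  by (rule finite_subset[OF _ finite_subset_distinct[of S]]) auto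

lemma alternating_domain_image:
  assumes "strict_mono_on S g" and "\<forall>a\<in>S. g a \<in> B' \<longleftrightarrow> a \<in> B"
  shows "alternating_domain (g ` S) B' = map g ` alternating_domain S B"
proof (intro equalityI subsetI)
  have inj: "inj_on g S"
    using assms(1) by (rule strict_mono_on_imp_inj_on)
  fix q' assume "q' \<in> alternating_domain (g ` S) B'"
  then have q': "distinct q'" "set q' = g ` S" "alternating B' q'"
    unfolding alternating_domain_def by auto
  define q where "q = map (inv_into S g) q'"
  have "map g q = q'"
    unfolding q_def map_map using q'(2) by (intro map_idI) (simp add: f_inv_into_f)
  moreover have "set q = S"
    unfolding q_def set_map q'(2) using inj by simp
  moreover have "distinct q" "alternating B q"
    using q' \<open>map g q = q'\<close> \<open>set q = S\<close> assms alternating_map[of q g B' B]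
    by (auto simp: distinct_map strict_mono_on_def)
  ultimately show "q' \<in> map g ` alternating_domain S B"
    unfolding alternating_domain_def by blast
next
  have inj: "inj_on g S"
    using assms(1) by (rule strict_mono_on_imp_inj_on)
  fix q' assume "q' \<in> map g ` alternating_domain S B"
  then obtain q where q: "distinct q" "set q = S" "alternating B q" and "q' = map g q"
    unfolding alternating_domain_def by blast
  then show "q' \<in> alternating_domain (g ` S) B'"
    using inj assms alternating_map[of q g B' B] unfolding alternating_domain_def
    by (simp add: distinct_map)
qed

lemma alternating_domain_snoc_last:
  assumes "q \<in> alternating_domain S B" and "S \<noteq> {}"
  obtains p x where "q = p @ [x]" "distinct (p @ [x])" "set p = S - {x}" "alternating B (p @ [x])"
proof -
  have q: "distinct q" "set q = S" "alternating B q"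
    using assms(1) unfolding alternating_domain_def by auto
  then obtain p x where qp: "q = p @ [x]"
    using assms(2) by (metis rev_exhaust set_empty)
  then have "set p = S - {x}"
    using q(1,2) by auto
  then show ?thesis
    using that q qp by simp
qed

lemma alternating_domain_last:
  assumes "x \<in> S"
  shows "{q \<in> alternating_domain S B. last q = x} =
    (\<lambda>p. p @ [x]) ` {p. distinct p \<and> set p = S - {x} \<and> alternating B (p @ [x])}"
proof (intro equalityI subsetI)
  fix q assume "q \<in> {q \<in> alternating_domain S B. last q = x}"
  then have q: "q \<in> alternating_domain S B" "last q = x"
    by auto
  have "S \<noteq> {}"
    using assms by auto
  with q(1) obtain p y
    where p: "q = p @ [y]" "distinct (p @ [y])" "set p = S - {y}" "alternating B (p @ [y])"
    by (rule alternating_domain_snoc_last)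
  moreover have "y = x"
    using p(1) q(2) by simp
  ultimately show "q \<in> (\<lambda>p. p @ [x]) ` {p. distinct p \<and> set p = S - {x} \<and> alternating B (p @ [x])}"
    by auto
next
  fix q assume "q \<in> (\<lambda>p. p @ [x]) ` {p. distinct p \<and> set p = S - {x} \<and> alternating B (p @ [x])}"
  then obtain p where "q = p @ [x]" "distinct p" "set p = S - {x}" "alternating B (p @ [x])"
    by blast
  then show "q \<in> {q \<in> alternating_domain S B. last q = x}"
    using assms unfolding alternating_domain_def by auto
qed

lemma card_alternating_domain_last_sum:
  assumes "finite S" and "S \<noteq> {}"
  shows "card {q \<in> alternating_domain S B. P (last q)} =
    (\<Sum>x\<in>{x \<in> S. P x}. card {q \<in> alternating_domain S B. last q = x})"
proof -
  have "last q \<in> S" if "q \<in> alternating_domain S B" for q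
  proof -
    have "set q = S"
      using that unfolding alternating_domain_def by simp
    then show ?thesis
      using assms(2) by (metis last_in_set set_empty)
  qed
  then have "{q \<in> alternating_domain S B. P (last q)} =
    (\<Union>x\<in>{x \<in> S. P x}. {q \<in> alternating_domain S B. last q = x})"
    by auto
  moreover have "card (\<Union>x\<in>{x \<in> S. P x}. {q \<in> alternating_domain S B. last q = x}) =
    (\<Sum>x\<in>{x \<in> S. P x}. card {q \<in> alternating_domain S B. last q = x})"
    by (rule card_UN_disjoint) (use assms(1) in \<open>auto simp: finite_alternating_domain\<close>)
  ultimately show ?thesis
    by simp
qed

lemma alternating_domain_last_Max:
  assumes "finite S" and "S \<noteq> {}"
  shows "{q \<in> alternating_domain S B. last q = Max S} =
    (\<lambda>p. p @ [Max S]) ` alternating_domain (S - {Max S}) B"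
proof -
  have "alternating B (p @ [Max S]) \<longleftrightarrow> alternating B p" if "distinct p" "set p = S - {Max S}" for p
  proof -
    have below: "\<forall>y\<in>set p. y < Max S"
      using that assms by (auto simp: order.strict_iff_order)
    then have "increasing_above (Max S) p" "low_before_high (Max S) p"
      "\<forall>j\<in>set p. \<forall>k\<in>set p. Max S < j \<longrightarrow> j < k \<longrightarrow> j \<notin> B"
      unfolding increasing_above_def low_before_high_def by (meson less_asym)+
    moreover have "distinct (p @ [Max S])"
      using that by simp
    ultimately show ?thesis
      by (simp add: alternating_snoc_iff)
  qed
  then have "{p. distinct p \<and> set p = S - {Max S} \<and> alternating B (p @ [Max S])} =
    alternating_domain (S - {Max S}) B"
    unfolding alternating_domain_def by blast
  then show ?thesis
    using alternating_domain_last[OF Max_in[OF assms]] by simp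
qed

lemma alternating_domain_last_below_empty:
  assumes "x \<in> S" "w \<in> S" "m \<in> S" and "w \<in> B" and "x < w" "w < m"
  shows "{q \<in> alternating_domain S B. last q = x} = {}"
proof -
  have "\<not> alternating B (p @ [x])" if "distinct p" "set p = S - {x}" for p
  proof
    assume "alternating B (p @ [x])"
    moreover have "distinct (p @ [x])"
      using that by simp
    ultimately have "\<forall>j\<in>set p. \<forall>k\<in>set p. x < j \<longrightarrow> j < k \<longrightarrow> j \<notin> B"
      using alternating_snoc_iff by blast
    moreover have "w \<in> set p" "m \<in> set p"
      using that assms by auto
    ultimately show False
      using assms by blast
  qed
  then show ?thesis
    unfolding alternating_domain_last[OF assms(1)] by auto
qed

lemma alternating_domain_last_above:
  assumes "finite S" and "x \<in> S" and "\<forall>b\<in>B. b < x"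
  shows "{q \<in> alternating_domain S B. last q = x} =
    (\<lambda>L. L @ sorted_list_of_set {y \<in> S. x < y} @ [x]) ` alternating_domain {y \<in> S. y < x} B"
proof -
  define R where "R = sorted_list_of_set {y \<in> S. x < y}"
  have R: "sorted R" "distinct R" "set R = {y \<in> S. x < y}"
    using assms(1) by (simp_all add: R_def)
  have snoc: "alternating B (p @ [x]) \<longleftrightarrow>
      alternating B p \<and> increasing_above x p \<and> low_before_high x p" if "distinct (p @ [x])" for p
    using assms(3) by (auto simp: alternating_snoc_iff[OF that])
  have "{p. distinct p \<and> set p = S - {x} \<and> alternating B (p @ [x])} =
    (\<lambda>L. L @ R) ` alternating_domain {y \<in> S. y < x} B"
  proof (intro equalityI subsetI)
    fix p assume "p \<in> {p. distinct p \<and> set p = S - {x} \<and> alternating B (p @ [x])}"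
    then have p: "distinct p" "set p = S - {x}" "alternating B p" "increasing_above x p"
        "low_before_high x p"
      using snoc by auto
    define L where "L = filter (\<lambda>y. y < x) p"
    have "{y \<in> set p. x < y} = {y \<in> S. x < y}"
      unfolding p(2) by auto
    then have pLR: "p = L @ R"
      unfolding L_def R_def using eq_filter_below_sorted_above[OF p(1) _ p(4,5)] p(2) by simp
    moreover have "set L = {y \<in> S. y < x}"
      unfolding L_def set_filter p(2) by auto
    moreover have "distinct L" "alternating B L"
      using p(1,3) alternating_append_left[of L R B] unfolding pLR by auto
    ultimately show "p \<in> (\<lambda>L. L @ R) ` alternating_domain {y \<in> S. y < x} B"
      unfolding alternating_domain_def by blast
  next
    fix p assume "p \<in> (\<lambda>L. L @ R) ` alternating_domain {y \<in> S. y < x} B"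
    then obtain L where L: "distinct L" "set L = {y \<in> S. y < x}" "alternating B L"
      and p: "p = L @ R"
      unfolding alternating_domain_def by blast
    have below: "\<forall>a\<in>set L. a < x" and above: "\<forall>b\<in>set R. x < b"
      unfolding L(2) R(3) by auto
    have d: "distinct (L @ R)"
      using L(1) R(2) below above by fastforce
    have set_LR: "set (L @ R) = S - {x}"
      unfolding set_append L(2) R(3) by auto
    have dx: "distinct ((L @ R) @ [x])"
      using d unfolding distinct_append[of "L @ R"] set_LR by simp
    have "alternating B (L @ R)"
      using L(3) alternating_append_sorted_iff[OF d R(1)] below above by fastforce
    then have "alternating B ((L @ R) @ [x])"
      using snoc[OF dx] increasing_above_low_before_high_append[OF d R(1) below above] by blast
    then show "p \<in> {p. distinct p \<and> set p = S - {x} \<and> alternating B (p @ [x])}"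
      using dx set_LR unfolding p by simp
  qed
  then show ?thesis
    using alternating_domain_last[OF assms(2)] by (simp add: image_image R_def)
qed

lemma alternating_domain_last_max_generator:
  assumes "w \<in> S" and "w \<in> A" and "\<forall>a\<in>A. a \<le> w"
  shows "{q \<in> alternating_domain S A. last q = w} =
    (\<lambda>p. p @ [w]) ` {p \<in> alternating_domain (S - {w}) A. increasing_above w p}"
proof -
  have "alternating A (p @ [w]) \<longleftrightarrow> alternating A p \<and> increasing_above w p"
    if "distinct p" "set p = S - {w}" for p
  proof -
    have "distinct (p @ [w])"
      using that by simp
    moreover have "\<forall>j\<in>set p. \<forall>k\<in>set p. w < j \<longrightarrow> j < k \<longrightarrow> j \<notin> A"
      using assms(3) by fastforce
    ultimately show ?thesis
      using assms(2) by (simp add: alternating_snoc_iff)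
  qed
  then have "{p. distinct p \<and> set p = S - {w} \<and> alternating A (p @ [w])} =
    {p \<in> alternating_domain (S - {w}) A. increasing_above w p}"
    unfolding alternating_domain_def by blast
  then show ?thesis
    using alternating_domain_last[OF assms(1)] by simp
qed

lemma last_increasing_above:
  assumes "q \<in> alternating_domain S B" and "increasing_above w q"
    and "finite S" and "S \<noteq> {}" and "w \<notin> S"
  shows "last q = Max S \<or> last q < w"
proof -
  obtain p y where p: "q = p @ [y]" "distinct (p @ [y])" "set p = S - {y}" "alternating B (p @ [y])"
    using assms(1,4) by (rule alternating_domain_snoc_last)
  have "y \<in> S"
    using assms(1) unfolding p(1) alternating_domain_def by auto
  have "y = Max S \<or> y < w"
  proof (rule ccontr)
    assume "\<not> (y = Max S \<or> y < w)"
    then have "w < y" "y < Max S"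
      using \<open>y \<in> S\<close> assms(3,5) by (auto simp: order.strict_iff_order)
    moreover have "Max S \<in> set p"
      using \<open>y < Max S\<close> assms(3,4) unfolding p(3) by simp
    ultimately show False
      using assms(2) increasing_above_snoc[OF p(2)] unfolding p(1) by auto
  qed
  then show ?thesis
    using p(1) by simp
qed

lemma increasing_above_if_last_below:
  assumes "q \<in> alternating_domain S B" and "S \<noteq> {}" and "last q < w"
  shows "increasing_above w q"
proof -
  obtain p y where p: "q = p @ [y]" "distinct (p @ [y])" "set p = S - {y}" "alternating B (p @ [y])"
    using assms(1,2) by (rule alternating_domain_snoc_last)
  have "y < w"
    using assms(3) p(1) by simp
  have "increasing_above y p"
    using p alternating_snoc_iff by blast
  then have "increasing_above w p"
    using \<open>y < w\<close> unfolding increasing_above_def by auto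
  then show ?thesis
    using \<open>y < w\<close> increasing_above_snoc[OF p(2)] unfolding p(1) by simp
qed

lemma card_increasing_above_remove_Max:
  assumes "finite S" and "S \<noteq> {}" and "w \<notin> S" and "w < Max S"
  shows "card {p \<in> alternating_domain S B. increasing_above w p} =
    card {p \<in> alternating_domain (S - {Max S}) B. increasing_above w p} +
    card {q \<in> alternating_domain S B. last q < w}"
proof -
  let ?T = "\<lambda>S. {p \<in> alternating_domain S B. increasing_above w p}"
  let ?m = "Max S"
  have top: "{q \<in> ?T S. last q = ?m} = (\<lambda>p. p @ [?m]) ` ?T (S - {?m})"
  proof -
    have "increasing_above w (p @ [?m]) \<longleftrightarrow> increasing_above w p"
      if "p \<in> alternating_domain (S - {?m}) B" for p
    proof -
      have "distinct (p @ [?m])" "\<forall>k\<in>set p. k < ?m"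
        using that assms(1) unfolding alternating_domain_def by (auto simp: order.strict_iff_order)
      then show ?thesis
        by (simp add: increasing_above_snoc)
    qed
    moreover have "{q \<in> ?T S. last q = ?m} =
      {q \<in> (\<lambda>p. p @ [?m]) ` alternating_domain (S - {?m}) B. increasing_above w q}"
      using alternating_domain_last_Max[OF assms(1,2), of B] by blast
    ultimately show ?thesis
      by (auto simp: image_iff)
  qed
  have split: "?T S = {q \<in> ?T S. last q = ?m} \<union> {q \<in> alternating_domain S B. last q < w}"
    using last_increasing_above[OF _ _ assms(1,2,3), of _ B]
      increasing_above_if_last_below[OF _ assms(2)] by blast
  have "card (?T S) = card {q \<in> ?T S. last q = ?m} + card {q \<in> alternating_domain S B. last q < w}"
    by (subst split, rule card_Un_disjoint)
      (use assms(1,4) in \<open>auto simp: finite_alternating_domain\<close>)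
  also have "card {q \<in> ?T S. last q = ?m} = card (?T (S - {?m}))"
    unfolding top by (rule card_image) (simp add: inj_on_def)
  finally show ?thesis .
qed

lemma card_alternating_domain_last_below_remove:
  assumes "\<forall>a\<in>A. a \<le> w" and "1 \<le> w" and "w < M"
  shows "card {q \<in> alternating_domain ({1..M} - {w}) A. last q < w} =
    card {q \<in> alternating_domain {1..M - 1} (A - {w}). last q < w}"
proof -
  define g where "g y = (if y < w then y else Suc y)" for y
  have mono: "strict_mono_on X g" for X
    unfolding strict_mono_on_def g_def by auto
  have img: "g ` {1..M - 1} = {1..M} - {w}"
  proof (intro equalityI subsetI)
    fix z assume "z \<in> {1..M} - {w}"
    then have "z = g (if z < w then z else z - 1)" "(if z < w then z else z - 1) \<in> {1..M - 1}"
      using assms(2,3) unfolding g_def by auto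
    then show "z \<in> g ` {1..M - 1}"
      by blast
  qed (use assms(3) in \<open>auto simp: g_def\<close>)
  have mem: "\<forall>a\<in>{1..M - 1}. g a \<in> A \<longleftrightarrow> a \<in> A - {w}"
    using assms(1) unfolding g_def by (auto simp: not_less_eq_eq order.order_iff_strict)
  have orders:
    "alternating_domain ({1..M} - {w}) A = map g ` alternating_domain {1..M - 1} (A - {w})"
    using alternating_domain_image[OF mono mem] unfolding img .
  have "last (map g q) < w \<longleftrightarrow> last q < w" if "q \<in> alternating_domain {1..M - 1} (A - {w})" for q
  proof -
    have "q \<noteq> []"
      using that assms(2,3) unfolding alternating_domain_def by auto
    then show ?thesis
      by (simp add: last_map g_def)
  qed
  then have "{q \<in> alternating_domain ({1..M} - {w}) A. last q < w} =
    map g ` {q \<in> alternating_domain {1..M - 1} (A - {w}). last q < w}"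
    unfolding orders by auto
  moreover have "inj_on (map g) X" for X
    using inj_mapI[OF strict_mono_on_imp_inj_on[OF mono]] by (rule inj_on_subset) simp
  ultimately show ?thesis
    by (simp add: card_image)
qed

lemma card_increasing_above_interval_rec:
  assumes "\<forall>a\<in>A. a \<le> w" and "1 \<le> w" and "w < M"
  shows "card {p \<in> alternating_domain ({1..M} - {w}) A. increasing_above w p} =
    card {p \<in> alternating_domain ({1..M - 1} - {w}) A. increasing_above w p} +
    card {q \<in> alternating_domain {1..M - 1} (A - {w}). last q < w}"
proof -
  let ?S = "{1..M} - {w}"
  have "M \<in> ?S"
    using assms(2,3) by auto
  then have max: "Max ?S = M" and ne: "?S \<noteq> {}"
    by (auto intro: Max_eqI)
  have "card {p \<in> alternating_domain ?S A. increasing_above w p} =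
      card {p \<in> alternating_domain (?S - {Max ?S}) A. increasing_above w p} +
      card {q \<in> alternating_domain ?S A. last q < w}"
    by (rule card_increasing_above_remove_Max) (use assms(3) max ne in auto)
  also have "?S - {Max ?S} = {1..M - 1} - {w}"
    using max by auto
  also have "card {q \<in> alternating_domain ?S A. last q < w} =
      card {q \<in> alternating_domain {1..M - 1} (A - {w}). last q < w}"
    by (rule card_alternating_domain_last_below_remove[OF assms])
  finally show ?thesis .
qed

lemma card_alternating_domain_last_Suc:
  assumes "j < M" and "\<forall>b\<in>B. b \<le> j"
  shows "card {q \<in> alternating_domain {1..M} B. last q = Suc j} = f j B"
proof -
  have "{y \<in> {1..M}. y < Suc j} = {1..j}"
    using assms(1) by auto
  then show ?thesis
    using alternating_domain_last_above[of "{1..M}" "Suc j" B] assms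
    by (simp add: f_eq_card_alternating_domain card_image inj_on_def less_Suc_eq_le)
qed

lemma f_eq_sum_last:
  assumes "1 \<le> M"
  shows "f M B = (\<Sum>x=1..<Suc M. card {q \<in> alternating_domain {1..M} B. last q = x})"
proof -
  have "f M B = card {q \<in> alternating_domain {1..M} B. True}"
    by (simp add: f_eq_card_alternating_domain)
  also have "\<dots> = (\<Sum>x\<in>{x \<in> {1..M}. True}. card {q \<in> alternating_domain {1..M} B. last q = x})"
    by (rule card_alternating_domain_last_sum) (use assms in auto)
  also have "{x \<in> {1..M}. True} = {1..<Suc M}"
    by auto
  finally show ?thesis .
qed

lemma f_split_at_max:
  assumes "w \<in> A" and "\<forall>a\<in>A. a \<le> w" and "1 \<le> w" and "w < M"
  shows "f M A = (\<Sum>j=w..<M. f j A) +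
    card {p \<in> alternating_domain ({1..M} - {w}) A. increasing_above w p}"
proof -
  let ?c = "\<lambda>x. card {q \<in> alternating_domain {1..M} A. last q = x}"
  have "f M A = (\<Sum>x=1..<Suc M. ?c x)"
    by (rule f_eq_sum_last) (use assms(3,4) in simp)
  also have "\<dots> = (\<Sum>x=1..<w. ?c x) + (\<Sum>x=w..<Suc M. ?c x)"
    by (rule sum.atLeastLessThan_concat[symmetric]) (use assms(3,4) in auto)
  also have "(\<Sum>x=w..<Suc M. ?c x) = ?c w + (\<Sum>x=Suc w..<Suc M. ?c x)"
    by (rule sum.atLeast_Suc_lessThan) (use assms(4) in simp)
  also have "(\<Sum>x=1..<w. ?c x) = 0"
  proof (intro sum.neutral ballI)
    fix x assume "x \<in> {1..<w}"
    then have "{q \<in> alternating_domain {1..M} A. last q = x} = {}"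
      using assms by (intro alternating_domain_last_below_empty[of x "{1..M}" w M A]) auto
    then show "?c x = 0"
      by (simp only: card.empty)
  qed
  also have "?c w = card {p \<in> alternating_domain ({1..M} - {w}) A. increasing_above w p}"
    using alternating_domain_last_max_generator[of w "{1..M}" A] assms
    by (simp add: card_image inj_on_def)
  also have "(\<Sum>x=Suc w..<Suc M. ?c x) = (\<Sum>j=w..<M. f j A)"
    unfolding sum.shift_bounds_Suc_ivl using card_alternating_domain_last_Suc assms(2)
    by (intro sum.cong) force+
  finally show ?thesis
    by simp
qed

lemma f_split_below:
  assumes "\<forall>b\<in>B. b < w" and "1 \<le> w" and "w \<le> M"
  shows "f M B = (\<Sum>j=w-1..<M. f j B) + card {q \<in> alternating_domain {1..M} B. last q < w}"
proof -
  let ?c = "\<lambda>x. card {q \<in> alternating_domain {1..M} B. last q = x}"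
  have "f M B = (\<Sum>x=1..<Suc M. ?c x)"
    by (rule f_eq_sum_last) (use assms(2,3) in simp)
  also have "\<dots> = (\<Sum>x=1..<w. ?c x) + (\<Sum>x=w..<Suc M. ?c x)"
    by (rule sum.atLeastLessThan_concat[symmetric]) (use assms(2,3) in auto)
  also have "(\<Sum>x=1..<w. ?c x) = card {q \<in> alternating_domain {1..M} B. last q < w}"
  proof -
    have "{x \<in> {1..M}. x < w} = {1..<w}"
      using assms(3) by auto
    then show ?thesis
      using card_alternating_domain_last_sum[of "{1..M}" B "\<lambda>x. x < w"] assms(2,3) by simp
  qed
  also have "(\<Sum>x=w..<Suc M. ?c x) = (\<Sum>j=w-1..<M. f j B)"
  proof -
    have "(\<Sum>x=w..<Suc M. ?c x) = (\<Sum>x=Suc (w-1)..<Suc M. ?c x)"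
      using assms(2) by simp
    also have "\<dots> = (\<Sum>j=w-1..<M. f j B)"
      unfolding sum.shift_bounds_Suc_ivl using card_alternating_domain_last_Suc assms(1)
      by (intro sum.cong) force+
    finally show ?thesis .
  qed
  finally show ?thesis
    by simp
qed

theorem proposition5:
  fixes n :: nat and A :: "nat set"
  assumes "n \<ge> 3" and "A \<subseteq> {1..n-1}" and "A \<noteq> {}"
    and "1 < Max A" and "Max A < n - 1"
  shows "int (f n A) = 2 * int (f (n-1) A) + int (f (n-1) (A - {Max A}))
           - (\<Sum>j = Max A - 1..n-2. int (f j (A - {Max A})))"
proof -
  define w where "w = Max A"
  define H where "H M = card {p \<in> alternating_domain ({1..M} - {w}) A. increasing_above w p}" for M
  define U where "U = card {q \<in> alternating_domain {1..n - 1} (A - {w}). last q < w}"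
  have "finite A"
    using assms(2) finite_subset by blast
  then have wA: "w \<in> A" and Aw: "\<forall>a\<in>A. a \<le> w"
    unfolding w_def using assms(3) by simp_all
  have w: "1 \<le> w" "w < n - 1"
    using assms(4,5) unfolding w_def by simp_all
  have "f n A = (\<Sum>j=w..<n. f j A) + H n"
    unfolding H_def using f_split_at_max[OF wA Aw w(1)] w(2) by simp
  moreover have "f (n - 1) A = (\<Sum>j=w..<n - 1. f j A) + H (n - 1)"
    unfolding H_def using f_split_at_max[OF wA Aw w] .
  moreover have "(\<Sum>j=w..<n. f j A) = (\<Sum>j=w..<n - 1. f j A) + f (n - 1) A"
    using w sum.atLeastLessThan_Suc[of w "n - 1" "\<lambda>j. f j A"] by simp
  moreover have "H n = H (n - 1) + U"
    unfolding H_def U_def using card_increasing_above_interval_rec[OF Aw w(1), of n] w by simp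
  moreover have "f (n - 1) (A - {w}) = (\<Sum>j=w - 1..<n - 1. f j (A - {w})) + U"
    unfolding U_def using Aw w by (intro f_split_below) auto
  moreover have "(\<Sum>j = w - 1..n - 2. int (f j (A - {w}))) = int (\<Sum>j=w - 1..<n - 1. f j (A - {w}))"
  proof -
    have "{w - 1..n - 2} = {w - 1..<n - 1}"
      using w by auto
    then show ?thesis
      by (simp add: of_nat_sum)
  qed
  ultimately show ?thesis
    unfolding w_def[symmetric] by linarith
qed

end
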